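(* For every formula $A$ of $\mathbf{L_1}$, if not $\vdash_T A$, then $\dashv_H A$.
   Context: Formulas of $\mathbf{L_1}$: built from atomic formulas $\epsilon ab$ ($a,b$ name variables, possibly equal) with primitive connectives $\vee,\sim$; $\wedge,\supset,\equiv$ defined as usual. Disjunctions may be associated in any way. $\vdash_H A$: $A$ belongs to the smallest set containing all instances of classical propositional tautologies and all formulas $\epsilon ab\supset\epsilon aa$, $(\epsilon ab\wedge\epsilon bc)\supset\epsilon ac$, $(\epsilon ab\wedge\epsilon bb)\supset\epsilon ba$, closed under modus ponens. Positive/negative parts (occurrences): $A$ is a positive part of $A$; if $B\vee C$ is a positive part then $B,C$ are positive parts; if $\sim B$ is a positive part then $B$ is a negative part; if $\sim B$ is a negative part then $B$ is a positive part. $F[B_+]$ ($G[B_-]$) denotes a formula with a specified occurrence of $B$ as positive (negative) part; $F[B_+,C_-]$ etc. denote specified non-overlapping occurrences. Tableaux: reduction rules ($\vee_-$) $G[B\vee C_-]$ $\mapsto$ two branches $G[B\vee C_-]\vee\sim B$, $G[B\vee C_-]\vee\sim C$; ($\epsilon_1$) $G[\epsilon ab_-]\mapsto G[\epsilon ab_-]\vee\sim\epsilon aa$; ($\epsilon_2$) $G[\epsilon ab_-,\epsilon bc_-]\mapsto G[\epsilon ab_-,\epsilon bc_-]\vee\sim\epsilon ac$; ($\epsilon_{3b}$) $G[\epsilon ab_-,\epsilon bb_-]\mapsto G[\epsilon ab_-,\epsilon bb_-]\vee\sim\epsilon ba$. A tableau for $A$ is a finite tree with root $A$ whose non-leaf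 nodes have as children the result of applying one rule. A branch is closed if its last formula has the form $F[B_+,B_-]$; a tableau is closed if all branches are. $\vdash_T A$: $A$ has a closed tableau. Hintikka formula: a formula $H$ such that (1) $H$ is not of the form $F[B_+,B_-]$; (2) if $B\vee C$ is a negative part of $H$ then $B$ or $C$ is; (3) if $\epsilon ab$ is a negative part then so is $\epsilon aa$; (4) if $\epsilon ab,\epsilon bc$ are negative parts then so is $\epsilon ac$; (5) if $\epsilon ab,\epsilon bb$ are negative parts then so is $\epsilon ba$. $\mathbf{HAR}$: fix a name variable $a_0$; $\dashv_H$ is the smallest set such that $\dashv_H\epsilon a_0a_0$; $\dashv_H\sim\epsilon a_0a_0$; if $\vdash_H A\supset B$ and $\dashv_H B$ then $\dashv_H A$; if $\dashv_H A$ and $A$ is obtained from $B$ by uniform substitution of name variables for name variables then $\dashv_H B$; if $A$ is a Hintikka formula that is a disjunction of atomic or negated atomic formulas, $\dashv_H A$, and $\epsilon ab$ is not a negative part of $A$, then $\dashv_H A\vee\epsilon ab$. *)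

theory Defs
  imports Main "HOL-Library.Multiset"
begin

datatype 'n form = Eps 'n 'n | Or "'n form" "'n form" | Neg "'n form"

type_synonym fm = "nat form"

definition Conj :: "'n form \<Rightarrow> 'n form \<Rightarrow> 'n form" where
  "Conj A B = Neg (Or (Neg A) (Neg B))"

definition Imp :: "'n form \<Rightarrow> 'n form \<Rightarrow> 'n form" where
  "Imp A B = Or (Neg A) B"

datatype pform = PVar nat | POr pform pform | PNeg pform

fun peval :: "(nat \<Rightarrow> bool) \<Rightarrow> pform \<Rightarrow> bool" where
  "peval v (PVar p) = v p"
| "peval v (POr P Q) = (peval v P \<or> peval v Q)"
| "peval v (PNeg P) = (\<not> peval v P)"

definition ptaut :: "pform \<Rightarrow> bool" where
  "ptaut P = (\<forall>v. peval v P)"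

fun psubst :: "(nat \<Rightarrow> fm) \<Rightarrow> pform \<Rightarrow> fm" where
  "psubst \<sigma> (PVar p) = \<sigma> p"
| "psubst \<sigma> (POr P Q) = Or (psubst \<sigma> P) (psubst \<sigma> Q)"
| "psubst \<sigma> (PNeg P) = Neg (psubst \<sigma> P)"

definition taut_instance :: "fm \<Rightarrow> bool" where
  "taut_instance A = (\<exists>P \<sigma>. ptaut P \<and> A = psubst \<sigma> P)"

inductive provH :: "fm \<Rightarrow> bool" where
  taut: "taut_instance A \<Longrightarrow> provH A"
| ax1: "provH (Imp (Eps a b) (Eps a a))"
| ax2: "provH (Imp (Conj (Eps a b) (Eps b c)) (Eps a c))"
| ax3: "provH (Imp (Conj (Eps a b) (Eps b b)) (Eps b a))"
| mp: "provH (Imp A B) \<Longrightarrow> provH A \<Longrightarrow> provH B"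

text \<open>parts p X: the multiset of occurrences (with polarity; True = positive)
  of parts of X, when X itself occurs with polarity p.\<close>

fun parts :: "bool \<Rightarrow> 'n form \<Rightarrow> (bool \<times> 'n form) multiset" where
  "parts p (Eps a b) = {#(p, Eps a b)#}"
| "parts p (Or B C) = {#(p, Or B C)#} + (if p then parts True B + parts True C else {#})"
| "parts p (Neg B) = {#(p, Neg B)#} + parts (\<not> p) B"

definition pos_part :: "'n form \<Rightarrow> 'n form \<Rightarrow> bool" where
  "pos_part B A = ((True, B) \<in># parts True A)"

definition neg_part :: "'n form \<Rightarrow> 'n form \<Rightarrow> bool" where
  "neg_part B A = ((False, B) \<in># parts True A)"

text \<open>A formula of the form F[B+, B-].\<close>
definition closed_form :: "'n form \<Rightarrow> bool" where
  "closed_form A = (\<exists>B. pos_part B A \<and> neg_part B A)"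

text \<open>tab_closed A: A has a closed tableau (a finite tree built by the reduction
  rules, all of whose branches end in a closed formula).  Two specified
  occurrences must be distinct occurrences (multiset inclusion).\<close>

inductive tab_closed :: "fm \<Rightarrow> bool" where
  leaf: "closed_form A \<Longrightarrow> tab_closed A"
| or_neg: "neg_part (Or B C) A \<Longrightarrow> tab_closed (Or A (Neg B)) \<Longrightarrow> tab_closed (Or A (Neg C))
           \<Longrightarrow> tab_closed A"
| eps1: "neg_part (Eps a b) A \<Longrightarrow> tab_closed (Or A (Neg (Eps a a))) \<Longrightarrow> tab_closed A"
| eps2: "{#(False, Eps a b), (False, Eps b c)#} \<subseteq># parts True A
         \<Longrightarrow> tab_closed (Or A (Neg (Eps a c))) \<Longrightarrow> tab_closed A"
| eps3b: "{#(False, Eps a b), (False, Eps b b)#} \<subseteq># parts True A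
         \<Longrightarrow> tab_closed (Or A (Neg (Eps b a))) \<Longrightarrow> tab_closed A"

definition hintikka :: "fm \<Rightarrow> bool" where
  "hintikka H =
     ((\<not> closed_form H)
    \<and> (\<forall>B C. neg_part (Or B C) H \<longrightarrow> neg_part B H \<or> neg_part C H)
    \<and> (\<forall>a b. neg_part (Eps a b) H \<longrightarrow> neg_part (Eps a a) H)
    \<and> (\<forall>a b c. neg_part (Eps a b) H \<and> neg_part (Eps b c) H \<longrightarrow> neg_part (Eps a c) H)
    \<and> (\<forall>a b. neg_part (Eps a b) H \<and> neg_part (Eps b b) H \<longrightarrow> neg_part (Eps b a) H))"

inductive lit_disj :: "fm \<Rightarrow> bool" where
  "lit_disj (Eps a b)"
| "lit_disj (Neg (Eps a b))"
| "lit_disj A \<Longrightarrow> lit_disj B \<Longrightarrow> lit_disj (Or A B)"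

inductive refH :: "nat \<Rightarrow> fm \<Rightarrow> bool" for a0 :: nat where
  base1: "refH a0 (Eps a0 a0)"
| base2: "refH a0 (Neg (Eps a0 a0))"
| rmp: "provH (Imp A B) \<Longrightarrow> refH a0 B \<Longrightarrow> refH a0 A"
| rsubst: "refH a0 A \<Longrightarrow> A = map_form f B \<Longrightarrow> refH a0 B"
| rext: "hintikka A \<Longrightarrow> lit_disj A \<Longrightarrow> refH a0 A \<Longrightarrow> \<not> neg_part (Eps a b) A
         \<Longrightarrow> refH a0 (Or A (Eps a b))"

end

theory Submission
  imports Defs "HOL-Library.Nat_Bijection"
begin

text \<open>If \<open>A\<close> has no closed tableau, applying the reduction rules to \<open>A\<close> while no branch closes
  (within the finite stock of subformulas of \<open>A\<close> and atoms over its names) must end in a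
  Hintikka formula \<open>H\<close>, and \<open>A \<supset> H\<close> is a tautology.  A Hintikka formula is refuted in HAR:
  it entails the clause made of its negative atoms (negated) and its positive atoms, and that
  clause is built from \<open>\<not>\<epsilon>a\<^sub>0a\<^sub>0\<close> by identifying all names and then by the Hintikka
  extension rule, one positive atom at a time.  Refutability passes from \<open>H\<close> back to \<open>A\<close>
  along the provable implication.\<close>

fun holds :: "('n \<Rightarrow> 'n \<Rightarrow> bool) \<Rightarrow> 'n form \<Rightarrow> bool" where
  "holds w (Eps a b) = w a b"
| "holds w (Or A B) = (holds w A \<or> holds w B)"
| "holds w (Neg A) = (\<not> holds w A)"

fun to_pform :: "fm \<Rightarrow> pform" where
  "to_pform (Eps a b) = PVar (prod_encode (a, b))"
| "to_pform (Or A B) = POr (to_pform A) (to_pform B)"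
| "to_pform (Neg A) = PNeg (to_pform A)"

lemma psubst_to_pform: "psubst (\<lambda>k. case prod_decode k of (a, b) \<Rightarrow> Eps a b) (to_pform A) = A"
  by (induction A) auto

lemma peval_to_pform: "peval v (to_pform A) = holds (\<lambda>a b. v (prod_encode (a, b))) A"
  by (induction A) auto

lemma provH_if_valid:
  assumes "\<And>w. holds w A"
  shows "provH A"
proof (rule provH.taut)
  have "ptaut (to_pform A)"
    using assms by (simp add: ptaut_def peval_to_pform)
  then show "taut_instance A"
    unfolding taut_instance_def using psubst_to_pform by metis
qed

lemma refH_if_entails:
  assumes "refH a0 B" and "\<And>w. holds w A \<Longrightarrow> holds w B"
  shows "refH a0 A"
proof (rule refH.rmp)
  show "provH (Imp A B)"
    using assms(2) by (intro provH_if_valid) (auto simp: Imp_def)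
qed (fact assms(1))

lemma self_in_parts: "(p, X) \<in># parts p X"
  by (cases X) auto

lemma parts_of_part: "(q, Y) \<in># parts p X \<Longrightarrow> set_mset (parts q Y) \<subseteq> set_mset (parts p X)"
  by (induction X arbitrary: p) (auto split: if_splits)

lemma names_part: "(q, Y) \<in># parts p X \<Longrightarrow> set_form Y \<subseteq> set_form X"
  by (induction X arbitrary: p) (auto split: if_splits)

lemma finite_atoms_parts: "finite {(a, b). (q, Eps a b) \<in># parts p X}"
proof -
  have "{(a, b). (q, Eps a b) \<in># parts p X} = (\<lambda>(a, b). (q, Eps a b)) -` set_mset (parts p X)"
    by auto
  then show ?thesis
    by (simp add: finite_vimageI inj_on_def)
qed

lemma holds_parts_countermodel:
  assumes or_neg: "\<And>B C. neg_part (Or B C) H \<Longrightarrow> neg_part B H \<or> neg_part C H"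
    and neg: "\<And>a b. neg_part (Eps a b) H \<Longrightarrow> w a b"
    and pos: "\<And>a b. pos_part (Eps a b) H \<Longrightarrow> \<not> w a b"
    and part: "(q, Y) \<in># parts True H"
  shows "holds w Y \<longleftrightarrow> \<not> q"
  using part
proof (induction Y arbitrary: q)
  case (Eps a b)
  then show ?case
    using neg pos by (cases q) (auto simp: pos_part_def neg_part_def)
next
  case (Or B C)
  show ?case
  proof (cases q)
    case True
    then have "set_mset (parts True (Or B C)) \<subseteq> set_mset (parts True H)"
      using Or.prems by (intro parts_of_part) simp
    then have "(True, B) \<in># parts True H" "(True, C) \<in># parts True H"
      using self_in_parts[of True B] self_in_parts[of True C] by auto
    then show ?thesis
      using Or.IH True by auto
  next
    case False
    then have "neg_part B H \<or> neg_part C H"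
      using or_neg Or.prems by (auto simp: neg_part_def)
    then show ?thesis
      using Or.IH False by (auto simp: neg_part_def)
  qed
next
  case (Neg B)
  have "(\<not> q, B) \<in># parts q (Neg B)"
    by (simp add: self_in_parts)
  then have "(\<not> q, B) \<in># parts True H"
    using parts_of_part[OF Neg.prems] by blast
  then show ?case
    using Neg.IH by auto
qed

abbreviation Eps_pair :: "'n \<times> 'n \<Rightarrow> 'n form" where
  "Eps_pair q \<equiv> Eps (fst q) (snd q)"

text \<open>\<open>clause p qs rs\<close> is \<open>(\<dots>((\<not>\<epsilon>q\<^sub>1 \<or> (\<dots> \<or> \<not>\<epsilon>p)) \<or> \<epsilon>r\<^sub>k) \<dots>) \<or> \<epsilon>r\<^sub>1\<close> for
  \<open>rs = [r\<^sub>1, \<dots>, r\<^sub>k]\<close>: the positive atoms are added last, as the extension rule of HAR demands.\<close>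

primrec neg_clause :: "'n \<times> 'n \<Rightarrow> ('n \<times> 'n) list \<Rightarrow> 'n form" where
  "neg_clause p [] = Neg (Eps_pair p)"
| "neg_clause p (q # qs) = Or (Neg (Eps_pair q)) (neg_clause p qs)"

primrec clause :: "'n \<times> 'n \<Rightarrow> ('n \<times> 'n) list \<Rightarrow> ('n \<times> 'n) list \<Rightarrow> 'n form" where
  "clause p qs [] = neg_clause p qs"
| "clause p qs (r # rs) = Or (clause p qs rs) (Eps_pair r)"

lemma neg_part_clause: "neg_part Y (clause p qs rs) \<longleftrightarrow> Y \<in> Eps_pair ` insert p (set qs)"
proof -
  have "(False, Y) \<in># parts True (neg_clause p qs) \<longleftrightarrow> Y \<in> Eps_pair ` insert p (set qs)"
    by (induction qs) auto
  then show ?thesis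
    unfolding neg_part_def by (induction rs) auto
qed

lemma pos_part_clause: "pos_part (Eps a b) (clause p qs rs) \<Longrightarrow> (a, b) \<in> set rs"
proof -
  have "(True, Eps a b) \<notin># parts True (neg_clause p qs)"
    by (induction qs) auto
  then show "pos_part (Eps a b) (clause p qs rs) \<Longrightarrow> (a, b) \<in> set rs"
    unfolding pos_part_def by (induction rs) auto
qed

lemma lit_disj_clause: "lit_disj (clause p qs rs)"
proof -
  have "lit_disj (neg_clause p qs)"
    by (induction qs) (auto intro: lit_disj.intros)
  then show ?thesis
    by (induction rs) (auto intro: lit_disj.intros)
qed

lemma holds_clause:
  "holds w (clause p qs rs) \<longleftrightarrow>
     (\<exists>q \<in> insert p (set qs). \<not> w (fst q) (snd q)) \<or> (\<exists>r \<in> set rs. w (fst r) (snd r))"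
proof -
  have "holds w (neg_clause p qs) \<longleftrightarrow> (\<exists>q \<in> insert p (set qs). \<not> w (fst q) (snd q))"
    by (induction qs) auto
  then show ?thesis
    by (induction rs) auto
qed

lemma refH_neg_clause: "refH a0 (neg_clause p qs)"
proof -
  have "holds w (map_form (\<lambda>_. a0) (neg_clause p qs)) \<longleftrightarrow> \<not> w a0 a0" for w
    by (induction qs) auto
  then have "refH a0 (map_form (\<lambda>_. a0) (neg_clause p qs))"
    by (intro refH_if_entails[OF refH.base2]) auto
  then show ?thesis
    by (rule refH.rsubst) (rule refl)
qed

text \<open>Hintikka conditions (3)--(5), read as properties of the relation of negative atoms.\<close>

definition eps_closed :: "('n \<times> 'n) set \<Rightarrow> bool" where
  "eps_closed N \<longleftrightarrow>
     (\<forall>a b. (a, b) \<in> N \<longrightarrow> (a, a) \<in> N) \<and> trans N \<and>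
     (\<forall>a b. (a, b) \<in> N \<longrightarrow> (b, b) \<in> N \<longrightarrow> (b, a) \<in> N)"

lemma eps_closedD:
  assumes "eps_closed N"
  shows "(a, b) \<in> N \<Longrightarrow> (a, a) \<in> N"
    and "(a, b) \<in> N \<Longrightarrow> (b, c) \<in> N \<Longrightarrow> (a, c) \<in> N"
    and "(a, b) \<in> N \<Longrightarrow> (b, b) \<in> N \<Longrightarrow> (b, a) \<in> N"
  using assms unfolding eps_closed_def by (blast dest: transD)+

lemma eps_closed_insert_fresh:
  assumes "eps_closed N" and "x \<notin> Field N"
  shows "eps_closed (insert (x, x) N)"
proof -
  have "a \<noteq> x \<and> b \<noteq> x" if "(a, b) \<in> N" for a b
    using assms(2) that by (auto intro: FieldI1 FieldI2)
  with assms(1) show ?thesis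
    unfolding eps_closed_def trans_def insert_iff prod.inject by blast
qed

lemma hintikka_clause:
  assumes "eps_closed (insert p (set qs))" and "set rs \<inter> insert p (set qs) = {}"
  shows "hintikka (clause p qs rs)"
proof -
  have neg_Eps: "neg_part (Eps a b) (clause p qs rs) \<longleftrightarrow> (a, b) \<in> insert p (set qs)" for a b
    by (force simp: neg_part_clause)
  have not_closed: "\<not> closed_form (clause p qs rs)"
  proof
    assume "closed_form (clause p qs rs)"
    then obtain q where "q \<in> insert p (set qs)" "pos_part (Eps_pair q) (clause p qs rs)"
      unfolding closed_form_def neg_part_clause by blast
    then show False
      using assms(2) pos_part_clause by fastforce
  qed
  have no_neg_Or: "\<not> neg_part (Or B C) (clause p qs rs)" for B C
    by (auto simp: neg_part_clause)
  show ?thesis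
    unfolding hintikka_def neg_Eps
  proof (intro conjI allI impI)
    fix B C
    assume "neg_part (Or B C) (clause p qs rs)"
    with no_neg_Or show "neg_part B (clause p qs rs) \<or> neg_part C (clause p qs rs)"
      by contradiction
  qed (use not_closed eps_closedD[OF assms(1)] in blast)+
qed

lemma refH_clause:
  assumes "eps_closed (insert p (set qs))" and "set rs \<inter> insert p (set qs) = {}"
  shows "refH a0 (clause p qs rs)"
  using assms(2)
proof (induction rs)
  case Nil
  then show ?case
    by (simp add: refH_neg_clause)
next
  case (Cons r rs)
  then have "hintikka (clause p qs rs)"
    using assms(1) by (intro hintikka_clause) auto
  moreover have "\<not> neg_part (Eps_pair r) (clause p qs rs)"
    using Cons.prems by (auto simp: neg_part_clause prod_eq_iff)
  ultimately show ?case
    using Cons by (auto intro: refH.rext lit_disj_clause)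
qed

lemma eps_closed_neg_atoms:
  "hintikka H \<Longrightarrow> eps_closed {(a, b). neg_part (Eps a b) H}"
  unfolding hintikka_def eps_closed_def trans_def mem_Collect_eq case_prod_conv by blast

text \<open>The fresh atom \<open>\<epsilon>xx\<close> supplies the negative literal that every clause needs, even when
  \<open>H\<close> has no negative atoms.\<close>

lemma refH_hintikka:
  assumes "hintikka H"
  shows "refH a0 H"
proof -
  have or_neg: "\<And>B C. neg_part (Or B C) H \<Longrightarrow> neg_part B H \<or> neg_part C H"
    and not_closed: "\<not> closed_form H"
    using assms unfolding hintikka_def by blast+
  define N where "N = {(a, b). neg_part (Eps a b) H}"
  define P where "P = {(a, b). pos_part (Eps a b) H}"
  obtain x :: nat where x: "x \<notin> set_form H"
    using ex_new_if_finite[OF infinite_UNIV_nat form.set_finite] by blast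
  have "N \<subseteq> set_form H \<times> set_form H" "P \<subseteq> set_form H \<times> set_form H"
    unfolding N_def P_def neg_part_def pos_part_def by (auto dest!: names_part)
  then have x_fresh: "x \<notin> Field N" "(x, x) \<notin> P"
    using x mono_Field[of N "set_form H \<times> set_form H"] by (auto simp: Field_square)
  have "finite N" "finite P"
    unfolding N_def P_def neg_part_def pos_part_def by (fact finite_atoms_parts)+
  then obtain qs rs where qs: "set qs = N" and rs: "set rs = P"
    by (meson finite_list)
  have "eps_closed (insert (x, x) (set qs))"
    unfolding qs N_def
    by (intro eps_closed_insert_fresh eps_closed_neg_atoms assms x_fresh[unfolded N_def])
  moreover have "P \<inter> N = {}"
    using not_closed unfolding P_def N_def closed_form_def by auto
  then have "set rs \<inter> insert (x, x) (set qs) = {}"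
    using x_fresh(2) unfolding rs qs by blast
  ultimately have refutable: "refH a0 (clause (x, x) qs rs)"
    by (rule refH_clause)
  have "holds w (clause (x, x) qs rs)" if "holds w H" for w
  proof (rule ccontr)
    assume "\<not> holds w (clause (x, x) qs rs)"
    then have "\<And>a b. neg_part (Eps a b) H \<Longrightarrow> w a b"
      and "\<And>a b. pos_part (Eps a b) H \<Longrightarrow> \<not> w a b"
      unfolding holds_clause qs rs N_def P_def by auto
    then have "\<not> holds w H"
      using holds_parts_countermodel[OF or_neg _ _ self_in_parts] by blast
    then show False
      using \<open>holds w H\<close> by contradiction
  qed
  with refutable show ?thesis
    by (rule refH_if_entails)
qed

fun subforms :: "'n form \<Rightarrow> 'n form set" where
  "subforms (Eps a b) = {Eps a b}"
| "subforms (Or B C) = insert (Or B C) (subforms B \<union> subforms C)"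
| "subforms (Neg B) = insert (Neg B) (subforms B)"

lemma finite_subforms: "finite (subforms X)"
  by (induction X) auto

lemma subforms_trans: "Y \<in> subforms X \<Longrightarrow> subforms Y \<subseteq> subforms X"
  by (induction X) auto

lemma names_subforms: "Y \<in> subforms X \<Longrightarrow> set_form Y \<subseteq> set_form X"
  by (induction X) auto

lemma part_in_subforms: "(q, Y) \<in># parts p X \<Longrightarrow> Y \<in> subforms X"
  by (induction X arbitrary: p) (auto split: if_splits)

text \<open>Every formula a tableau for \<open>A\<close> ever adds as a negative part lies in this finite set.\<close>

definition tableau_universe :: "'n form \<Rightarrow> 'n form set" where
  "tableau_universe A = subforms A \<union> (\<lambda>(a, c). Eps a c) ` (set_form A \<times> set_form A)"

lemma finite_tableau_universe: "finite (tableau_universe A)"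
  unfolding tableau_universe_def by (simp add: finite_subforms)

lemma names_tableau_universe: "Y \<in> tableau_universe A \<Longrightarrow> set_form Y \<subseteq> set_form A"
  unfolding tableau_universe_def using names_subforms by auto

lemma Eps_in_tableau_universe:
  "a \<in> set_form A \<Longrightarrow> c \<in> set_form A \<Longrightarrow> Eps a c \<in> tableau_universe A"
  unfolding tableau_universe_def by auto

lemma part_in_tableau_universe:
  assumes "Y \<in> tableau_universe A" and "(q, Z) \<in># parts p Y"
  shows "Z \<in> tableau_universe A"
proof (cases "Y \<in> subforms A")
  case True
  then show ?thesis
    using assms(2) part_in_subforms subforms_trans unfolding tableau_universe_def by blast
next
  case False
  then obtain a c where "Y = Eps a c"
    using assms(1) unfolding tableau_universe_def by auto
  then show ?thesis
    using assms by simp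
qed

lemma neg_part_Or_Neg: "neg_part Z (Or G (Neg X)) \<longleftrightarrow> neg_part Z G \<or> (False, Z) \<in># parts False X"
  by (simp add: neg_part_def)

lemma neg_parts_pair_subset_mset:
  assumes "neg_part B G" "neg_part C G" "B \<noteq> C"
  shows "{#(False, B), (False, C)#} \<subseteq># parts True G"
  using assms by (simp add: neg_part_def insert_subset_eq_iff in_diff_count)

lemma tableau_extension:
  assumes "\<not> hintikka G" and "\<not> tab_closed G"
    and univ: "\<And>Y. neg_part Y G \<Longrightarrow> Y \<in> tableau_universe A"
  obtains X where "X \<in> tableau_universe A" "\<not> neg_part X G" "\<not> tab_closed (Or G (Neg X))"
proof -
  have names: "a \<in> set_form A" "b \<in> set_form A" if "neg_part (Eps a b) G" for a b
    using names_tableau_universe[OF univ[OF that]] by auto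
  have "\<not> closed_form G"
    using assms(2) tab_closed.leaf by blast
  with assms(1) consider
      (or_neg) B C where "neg_part (Or B C) G" "\<not> neg_part B G" "\<not> neg_part C G"
    | (eps1) a b where "neg_part (Eps a b) G" "\<not> neg_part (Eps a a) G"
    | (eps2) a b c where "neg_part (Eps a b) G" "neg_part (Eps b c) G" "\<not> neg_part (Eps a c) G"
    | (eps3b) a b where "neg_part (Eps a b) G" "neg_part (Eps b b) G" "\<not> neg_part (Eps b a) G"
    unfolding hintikka_def by blast
  then show ?thesis
  proof cases
    case or_neg
    have "(True, B) \<in># parts True (Or B C)" "(True, C) \<in># parts True (Or B C)"
      by (simp_all add: self_in_parts)
    then have "B \<in> tableau_universe A" "C \<in> tableau_universe A"
      using part_in_tableau_universe univ[OF or_neg(1)] by blast+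
    moreover have "\<not> tab_closed (Or G (Neg B)) \<or> \<not> tab_closed (Or G (Neg C))"
      using assms(2) tab_closed.or_neg[OF or_neg(1)] by blast
    ultimately show ?thesis
      using that or_neg by blast
  next
    case eps1
    then have "Eps a a \<in> tableau_universe A"
      using names by (intro Eps_in_tableau_universe)
    moreover have "\<not> tab_closed (Or G (Neg (Eps a a)))"
      using assms(2) tab_closed.eps1[OF eps1(1)] by blast
    ultimately show ?thesis
      using that eps1(2) by blast
  next
    case eps2
    then have "Eps a c \<in> tableau_universe A"
      using names by (intro Eps_in_tableau_universe)
    moreover have "{#(False, Eps a b), (False, Eps b c)#} \<subseteq># parts True G"
      using eps2 by (intro neg_parts_pair_subset_mset) auto
    then have "\<not> tab_closed (Or G (Neg (Eps a c)))"
      using assms(2) tab_closed.eps2 by blast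
    ultimately show ?thesis
      using that eps2(3) by blast
  next
    case eps3b
    then have "Eps b a \<in> tableau_universe A"
      using names by (intro Eps_in_tableau_universe)
    moreover have "{#(False, Eps a b), (False, Eps b b)#} \<subseteq># parts True G"
      using eps3b by (intro neg_parts_pair_subset_mset) auto
    then have "\<not> tab_closed (Or G (Neg (Eps b a)))"
      using assms(2) tab_closed.eps3b by blast
    ultimately show ?thesis
      using that eps3b(3) by blast
  qed
qed

lemma saturation:
  assumes "\<not> tab_closed G" and "\<And>Y. neg_part Y G \<Longrightarrow> Y \<in> tableau_universe A"
  shows "\<exists>H. hintikka H \<and> (\<forall>w. holds w G \<longrightarrow> holds w H)"
  using assms
proof (induction "card (tableau_universe A - {Y. neg_part Y G})" arbitrary: G rule: less_induct)
  case less
  show ?case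
  proof (cases "hintikka G")
    case False
    obtain X where X: "X \<in> tableau_universe A" "\<not> neg_part X G"
      and open_branch: "\<not> tab_closed (Or G (Neg X))"
      using tableau_extension[OF False less.prems] .
    let ?G' = "Or G (Neg X)"
    have univ': "Y \<in> tableau_universe A" if "neg_part Y ?G'" for Y
      using that less.prems(2) X(1) part_in_tableau_universe unfolding neg_part_Or_Neg by blast
    have "neg_part X ?G'"
      unfolding neg_part_Or_Neg using self_in_parts by blast
    then have "tableau_universe A - {Y. neg_part Y ?G'} \<subset> tableau_universe A - {Y. neg_part Y G}"
      using X by (auto simp: neg_part_Or_Neg)
    then have "card (tableau_universe A - {Y. neg_part Y ?G'})
        < card (tableau_universe A - {Y. neg_part Y G})"
      by (simp add: psubset_card_mono finite_tableau_universe)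
    then show ?thesis
      using less.hyps[OF _ open_branch univ'] by auto
  qed blast
qed

theorem corollary3p2:
  fixes a0 :: nat and A :: fm
  assumes "\<not> tab_closed A"
  shows "refH a0 A"
proof -
  have "Y \<in> tableau_universe A" if "neg_part Y A" for Y
    using that part_in_subforms unfolding neg_part_def tableau_universe_def by blast
  then obtain H where "hintikka H" and "\<And>w. holds w A \<Longrightarrow> holds w H"
    using saturation assms by blast
  then show ?thesis
    using refH_hintikka refH_if_entails by blast
qed

end
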